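(* Let $0<q<1$. For every $n\in\mathbb Z$, the quantity $a:=\langle n|\sum_{x\in\mathbb Z}S^1_x|n-1\rangle$ is finite, independent of $n$, and equal to $$a=\frac12\sum_{k\ge0}(-1)^kq^{k(k+1)}\,\frac{1+q^{1+2k}}{1-q^{1+2k}}.$$
   Context: Fix $0<q<1$, related to the anisotropy by $q+q^{-1}=2\Delta$ with $\Delta>1$. Let $\Omega^{+-}=\bigotimes_{x\le0}|\!\uparrow\rangle\otimes\bigotimes_{x>0}|\!\downarrow\rangle$, and let $\mathcal H$ be the incomplete tensor product space generated from it. Define the grand-canonical vector $$\psi(z)=\prod_{x\le0}(1+z^{-1}q^{-x}S^-_x)\prod_{x\ge1}(1+zq^{x}S^+_x)\,\Omega^{+-}$$ for $z\neq0$. Expand it as $\psi(z)=\sum_{n\in\mathbb Z}\psi_nz^n$. Explicitly, $\psi_n$ is the sum, over finite sets $A\subset\{x\le0\}$ and $B\subset\{x\ge1\}$ with $|B|-|A|=n$, of $\prod_{x\in A}q^{|x|}\prod_{y\in B}q^{y}$ times the vector obtained from $\Omega^{+-}$ by flipping the spins in $A\cup B$. The vector $\psi_n$ has renormalized total $S^3$ equal to $n$. The kink ground states are $|n\rangle=\psi_n/\|\psi_n\|$, $n\in\mathbb Z$. $S^1_x=\tfrac12(S^+_x+S^-_x)$. *)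

theory Defs
  imports "HOL-Analysis.Analysis"
begin

text \<open>Incomplete tensor product space generated by Omega^{+-}: orthonormal basis e_F indexed
by the finite sets F of flipped sites (relative to Omega^{+-}). A vector is represented by its
(real) coefficient function on int set; only finite F carry coefficients.\<close>

definition configs :: "int set set" where
  "configs = {F. finite F}"

definition ip :: "(int set \<Rightarrow> real) \<Rightarrow> (int set \<Rightarrow> real) \<Rightarrow> real" where
  "ip u v = (\<Sum>\<^sub>\<infinity>F\<in>configs. u F * v F)"

definition hnorm :: "(int set \<Rightarrow> real) \<Rightarrow> real" where
  "hnorm v = sqrt (ip v v)"

definition flip :: "int \<Rightarrow> int set \<Rightarrow> int set" where
  "flip x F = (if x \<in> F then F - {x} else insert x F)"

definition spin_up :: "int \<Rightarrow> int set \<Rightarrow> bool" where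
  "spin_up x F = ((x \<le> 0) = (x \<notin> F))"

text \<open>S^+_x e_F = e_{flip x F} if spin at x is down in F, else 0; S^-_x analogously.\<close>
definition Splus :: "int \<Rightarrow> (int set \<Rightarrow> real) \<Rightarrow> (int set \<Rightarrow> real)" where
  "Splus x v = (\<lambda>G. if spin_up x G then v (flip x G) else 0)"

definition Sminus :: "int \<Rightarrow> (int set \<Rightarrow> real) \<Rightarrow> (int set \<Rightarrow> real)" where
  "Sminus x v = (\<lambda>G. if \<not> spin_up x G then v (flip x G) else 0)"

definition S1 :: "int \<Rightarrow> (int set \<Rightarrow> real) \<Rightarrow> (int set \<Rightarrow> real)" where
  "S1 x v = (\<lambda>G. (Splus x v G + Sminus x v G) / 2)"

text \<open>Renormalized total S^3 of e_F: |F \<inter> {x\<ge>1}| - |F \<inter> {x\<le>0}|.\<close>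
definition charge :: "int set \<Rightarrow> int" where
  "charge F = int (card {x\<in>F. x \<ge> 1}) - int (card {x\<in>F. x \<le> 0})"

definition weight :: "real \<Rightarrow> int set \<Rightarrow> real" where
  "weight q F = (\<Prod>x\<in>F. q ^ nat \<bar>x\<bar>)"

text \<open>psi_n: coefficient of z^n in psi(z).\<close>
definition psi :: "real \<Rightarrow> int \<Rightarrow> (int set \<Rightarrow> real)" where
  "psi q n = (\<lambda>F. if finite F \<and> charge F = n then weight q F else 0)"

definition ket :: "real \<Rightarrow> int \<Rightarrow> (int set \<Rightarrow> real)" where
  "ket q n = (\<lambda>F. psi q n F / hnorm (psi q n))"

end

theory Submission
  imports Defs
begin

(* Write w(F) = q^(sum of |x| over x in F) for the coefficient of psi_n on a configuration F of
   flipped sites. Translating the chain by one site maps the configurations of charge n onto those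
   of charge n + 1 and multiplies w by q^(n+1). Hence ||psi_n||^2 = q^(n(n+1)) ||psi_0||^2, the
   kink states are translates of one another, and <n|S1_x|n-1> depends only on x - n.

   For n = 0 the matrix element equals q^|x| M_x / (2 ||psi_0||^2), where M_x is the sum of w^2
   over the configurations of charge 0 (x <= 0) resp. -1 (x >= 1) in which x is not flipped.
   Sorting the configurations of ||psi_m||^2 by whether x is flipped gives
   ||psi_m||^2 = M_x(m) + q^(2|x|) M_x(m -+ 1); unrolled, this recursion yields
   <0|S1_x|-1> = 1/2 sum_j (-1)^j q^(j(j+1)) (q^(2j+1))^|x|. The double series over x and j
   converges absolutely, and summing over x first with sum_x r^|x| = (1+r)/(1-r) gives the
   formula. *)

lemma has_sum_geometric:
  fixes r :: real
  assumes "0 \<le> r" "r < 1"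
  shows "((\<lambda>n. r ^ n) has_sum 1 / (1 - r)) UNIV"
  by (rule sums_nonneg_imp_has_sum) (use assms geometric_sums[of r] in auto)

lemma has_sum_power_abs_int:
  fixes r :: real
  assumes "0 \<le> r" "r < 1"
  shows "((\<lambda>x::int. r ^ nat \<bar>x\<bar>) has_sum (1 + r) / (1 - r)) UNIV"
proof -
  note geometric = has_sum_geometric[OF assms]
  have nonpos: "((\<lambda>x::int. r ^ nat \<bar>x\<bar>) has_sum 1 / (1 - r)) (range (\<lambda>m. - int m))"
    using geometric by (subst has_sum_reindex) (auto simp: inj_on_def o_def)
  have "((\<lambda>m. r ^ Suc m) has_sum r * (1 / (1 - r))) UNIV"
    using has_sum_cmult_right[OF geometric, of r] by simp
  then have pos: "((\<lambda>x::int. r ^ nat \<bar>x\<bar>) has_sum r / (1 - r)) (range (\<lambda>m. int m + 1))"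
    by (subst has_sum_reindex) (auto simp: inj_on_def o_def nat_add_distrib)
  have "(UNIV :: int set) = range (\<lambda>m. - int m) \<union> range (\<lambda>m. int m + 1)"
  proof -
    have "x \<in> range (\<lambda>m. - int m) \<union> range (\<lambda>m. int m + 1)" for x :: int
      using image_eqI[of x "\<lambda>m. - int m" "nat (- x)"] image_eqI[of x "\<lambda>m. int m + 1" "nat (x - 1)"]
      by (cases "x \<le> 0") auto
    then show ?thesis by blast
  qed
  moreover have "range (\<lambda>m. - int m) \<inter> range (\<lambda>m. int m + 1) = {}"
    by auto
  ultimately show ?thesis
    using has_sum_Un_disjoint[OF nonpos pos] assms by (simp add: add_divide_distrib)
qed

lemma has_sum_iterated_eq:
  fixes f :: "'a \<Rightarrow> 'b \<Rightarrow> 'c::{banach, uniform_topological_group_add}"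
  assumes summable: "(\<lambda>(x, y). f x y) summable_on A \<times> B"
    and rows: "\<And>x. x \<in> A \<Longrightarrow> (f x has_sum g x) B"
    and columns: "\<And>y. y \<in> B \<Longrightarrow> ((\<lambda>x. f x y) has_sum h y) A"
  obtains s where "(g has_sum s) A" "(h has_sum s) B"
proof
  let ?s = "\<Sum>\<^sub>\<infinity>(x, y)\<in>A \<times> B. f x y"
  have "((\<lambda>(x, y). f x y) has_sum ?s) (A \<times> B)"
    using summable by (rule has_sum_infsum)
  then show "(g has_sum ?s) A"
    by (rule has_sum_Sigma') (simp add: rows)
  from \<open>((\<lambda>(x, y). f x y) has_sum ?s) (A \<times> B)\<close>
  have "((\<lambda>(y, x). f x y) has_sum ?s) (B \<times> A)"
    by (subst (asm) has_sum_swap) simp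
  then show "(h has_sum ?s) B"
    by (rule has_sum_Sigma') (simp add: columns)
qed

lemma alternating_telescoping_sums:
  fixes u v :: "nat \<Rightarrow> real"
  assumes rec: "\<And>k. v k = u k + c * u (Suc k)" and c: "\<bar>c\<bar> \<le> 1" and u: "u \<longlonglongrightarrow> 0"
  shows "(\<lambda>j. (- c) ^ j * v j) sums u 0"
proof -
  have partial_sums: "(\<Sum>j<k. (- c) ^ j * v j) = u 0 - (- c) ^ k * u k" for k
    by (induction k) (simp_all add: rec algebra_simps)
  have "(\<lambda>k. (- c) ^ k * u k) \<longlonglongrightarrow> 0"
  proof (rule Lim_null_comparison[OF _ tendsto_rabs_zero[OF u]])
    have "\<bar>(- c) ^ k\<bar> * \<bar>u k\<bar> \<le> 1 * \<bar>u k\<bar>" for k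
      using c by (intro mult_right_mono) (simp_all add: power_abs power_le_one)
    then show "\<forall>\<^sub>F k in sequentially. norm ((- c) ^ k * u k) \<le> \<bar>u k\<bar>"
      by (simp add: abs_mult)
  qed
  then have "(\<lambda>k. u 0 - (- c) ^ k * u k) \<longlonglongrightarrow> u 0"
    using tendsto_diff[OF tendsto_const] by fastforce
  then show ?thesis
    unfolding sums_def partial_sums .
qed

lemma S1_apply: "S1 x v G = v (flip x G) / 2"
  by (simp add: S1_def Splus_def Sminus_def)

lemma flip_flip [simp]: "flip x (flip x F) = F"
  by (auto simp: flip_def)

lemma finite_flip [simp]: "finite (flip x F) = finite F"
  by (auto simp: flip_def)

lemma bij_betw_flip: "bij_betw (flip x) configs configs"
  by (rule bij_betwI[where g = "flip x"]) (auto simp: configs_def)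

definition site_sign :: "int \<Rightarrow> int" where
  "site_sign x = (if x \<ge> 1 then 1 else -1)"

lemma charge_eq_sum: "finite F \<Longrightarrow> charge F = (\<Sum>x\<in>F. site_sign x)"
  by (simp add: charge_def site_sign_def sum.If_cases Int_def Compl_eq int_one_le_iff_zero_less not_less)

lemma sum_flip:
  fixes h :: "int \<Rightarrow> 'b::ab_group_add"
  assumes "finite F"
  shows "(\<Sum>y\<in>flip x F. h y) = (\<Sum>y\<in>F. h y) + (if x \<in> F then - h x else h x)"
  using assms by (auto simp: flip_def sum.remove)

lemma charge_insert: "finite F \<Longrightarrow> x \<notin> F \<Longrightarrow> charge (insert x F) = charge F + site_sign x"
  by (simp add: charge_eq_sum)

lemma charge_remove: "finite F \<Longrightarrow> x \<in> F \<Longrightarrow> charge (F - {x}) = charge F - site_sign x"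
  by (simp add: charge_eq_sum sum_diff1)

lemma weight_insert: "finite F \<Longrightarrow> x \<notin> F \<Longrightarrow> weight q (insert x F) = q ^ nat \<bar>x\<bar> * weight q F"
  by (simp add: weight_def)

lemma weight_nonneg: "0 \<le> r \<Longrightarrow> 0 \<le> weight r F"
  by (simp add: weight_def prod_nonneg)

lemma weight_square: "weight q F ^ 2 = weight (q\<^sup>2) F"
  by (simp add: weight_def prod_power_distrib mult.commute flip: power_mult)

(* Translation by one site in flip coordinates: the translate of Omega^{+-} differs from
   Omega^{+-} exactly at site 1. *)
definition translate :: "int set \<Rightarrow> int set" where
  "translate F = flip 1 ((\<lambda>x. x + 1) ` F)"

definition weight_exponent :: "int set \<Rightarrow> int" where
  "weight_exponent F = (\<Sum>x\<in>F. \<bar>x\<bar>)"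

lemma weight_eq_powr: "0 < q \<Longrightarrow> weight q F = q powr weight_exponent F"
  by (simp add: weight_def weight_exponent_def powr_sum flip: powr_realpow)

lemma finite_translate [simp]: "finite (translate F) = finite F"
  by (simp add: translate_def finite_image_iff)

lemma translate_flip: "translate (flip x F) = flip (x + 1) (translate F)"
  by (auto simp: translate_def flip_def)

lemma bij_betw_translate: "bij_betw translate configs configs"
proof (rule bij_betwI[where g = "\<lambda>G. (\<lambda>x. x - 1) ` flip 1 G"])
  show "translate \<in> configs \<rightarrow> configs" "(\<lambda>G. (\<lambda>x. x - 1) ` flip 1 G) \<in> configs \<rightarrow> configs"
    by (auto simp: configs_def)
qed (simp_all add: translate_def image_image)

lemma sum_translate:
  fixes h :: "int \<Rightarrow> 'b::ab_group_add"
  assumes "finite F"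
  shows "(\<Sum>y\<in>translate F. h y) = (\<Sum>x\<in>F. h (x + 1)) + (if 0 \<in> F then - h 1 else h 1)"
proof -
  have "(1 \<in> (\<lambda>x. x + 1) ` F) = (0 \<in> F)" by force
  then show ?thesis
    using assms by (simp add: translate_def sum_flip sum.reindex)
qed

lemma charge_translate: "finite F \<Longrightarrow> charge (translate F) = charge F + 1"
proof -
  assume F: "finite F"
  have "(\<Sum>x\<in>F. site_sign (x + 1)) = (\<Sum>x\<in>F. site_sign x + (if x = 0 then 2 else 0))"
    by (rule sum.cong) (auto simp: site_sign_def)
  then show ?thesis
    using F by (simp add: charge_eq_sum sum_translate sum.distrib site_sign_def)
qed

lemma weight_exponent_translate:
  "finite F \<Longrightarrow> weight_exponent (translate F) = weight_exponent F + charge F + 1"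
proof -
  assume F: "finite F"
  have "(\<Sum>x\<in>F. \<bar>x + 1\<bar>) = (\<Sum>x\<in>F. \<bar>x\<bar> + site_sign x + (if x = 0 then 2 else 0))"
    by (rule sum.cong) (auto simp: site_sign_def)
  then show ?thesis
    using F by (simp add: weight_exponent_def charge_eq_sum sum_translate sum.distrib)
qed

lemma weight_translate:
  "0 < q \<Longrightarrow> finite F \<Longrightarrow> weight q (translate F) = q powr (charge F + 1) * weight q F"
  by (simp add: weight_eq_powr weight_exponent_translate add_ac flip: powr_add)

lemma summable_on_weight:
  fixes r :: real
  assumes r: "0 \<le> r" "r < 1"
  shows "weight r summable_on configs"
proof (rule nonneg_bdd_above_summable_on)
  show "0 \<le> weight r F" for F
    using r(1) by (rule weight_nonneg)
  show "bdd_above (sum (weight r) ` {\<F>. \<F> \<subseteq> configs \<and> finite \<F>})"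
  proof (rule bdd_aboveI2)
    fix \<F> assume "\<F> \<in> {\<F>. \<F> \<subseteq> configs \<and> finite \<F>}"
    then have \<F>: "\<F> \<subseteq> Pow (\<Union>\<F>)" "finite (\<Union>\<F>)"
      by (auto simp: configs_def)
    have "sum (weight r) \<F> \<le> (\<Sum>F\<in>Pow (\<Union>\<F>). weight r F)"
      using \<F> r by (intro sum_mono2) (auto simp: weight_nonneg)
    also have "\<dots> = (\<Prod>x\<in>\<Union>\<F>. r ^ nat \<bar>x\<bar> + 1)"
      using prod_add[OF \<F>(2), of "\<lambda>x. r ^ nat \<bar>x\<bar>" "\<lambda>_. 1"] by (simp add: weight_def)
    also have "\<dots> \<le> (\<Prod>x\<in>\<Union>\<F>. exp (r ^ nat \<bar>x\<bar>))"
      by (intro prod_mono) (auto simp: add.commute r)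
    also have "\<dots> = exp (\<Sum>x\<in>\<Union>\<F>. r ^ nat \<bar>x\<bar>)"
      by (simp add: exp_sum[OF \<F>(2)])
    also have "\<dots> \<le> exp ((1 + r) / (1 - r))"
      using finite_sum_le_has_sum[OF has_sum_power_abs_int[OF r] \<F>(2)] r by simp
    finally show "sum (weight r) \<F> \<le> exp ((1 + r) / (1 - r))" .
  qed
qed

lemma summable_on_weight_square_restrict:
  fixes q :: real
  assumes "0 < q" "q < 1"
  shows "(\<lambda>F. if P F then weight q F ^ 2 else 0) summable_on configs"
proof (rule summable_on_comparison_test)
  show "weight (q\<^sup>2) summable_on configs"
    using assms by (intro summable_on_weight) (auto simp: power_less_one_iff)
  have "0 \<le> weight (q\<^sup>2) F" for F
    by (simp add: weight_nonneg)
  then show "(if P F then weight q F ^ 2 else 0) \<le> weight (q\<^sup>2) F" for F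
    by (simp add: weight_square)
qed simp

definition psi_norm2 :: "real \<Rightarrow> int \<Rightarrow> real" where
  "psi_norm2 q n = (\<Sum>\<^sub>\<infinity>F\<in>configs. if charge F = n then weight q F ^ 2 else 0)"

definition psi_norm2_avoiding :: "real \<Rightarrow> int \<Rightarrow> int \<Rightarrow> real" where
  "psi_norm2_avoiding q x n = (\<Sum>\<^sub>\<infinity>F\<in>configs. if charge F = n \<and> x \<notin> F then weight q F ^ 2 else 0)"

lemma hnorm_psi: "hnorm (psi q n) = sqrt (psi_norm2 q n)"
  unfolding hnorm_def ip_def psi_norm2_def
  by (rule arg_cong[where f = sqrt], rule infsum_cong) (auto simp: psi_def configs_def power2_eq_square)

lemma psi_norm2_succ:
  assumes q: "0 < q"
  shows "psi_norm2 q (n + 1) = q powr (2 * (n + 1)) * psi_norm2 q n"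
proof -
  have "psi_norm2 q (n + 1) =
        (\<Sum>\<^sub>\<infinity>F\<in>configs. if charge (translate F) = n + 1 then weight q (translate F) ^ 2 else 0)"
    unfolding psi_norm2_def by (rule infsum_reindex_bij_betw[OF bij_betw_translate, symmetric])
  also have "\<dots> = (\<Sum>\<^sub>\<infinity>F\<in>configs. q powr (2 * (n + 1)) * (if charge F = n then weight q F ^ 2 else 0))"
  proof (rule infsum_cong)
    fix F assume "F \<in> configs"
    moreover have "(q powr (n + 1)) ^ 2 = q powr (2 * (n + 1))"
      by (simp add: power2_eq_square flip: powr_add)
    ultimately show "(if charge (translate F) = n + 1 then weight q (translate F) ^ 2 else 0) =
        q powr (2 * (n + 1)) * (if charge F = n then weight q F ^ 2 else 0)"
      using q by (auto simp: configs_def charge_translate weight_translate power_mult_distrib)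
  qed
  also have "\<dots> = q powr (2 * (n + 1)) * psi_norm2 q n"
    unfolding psi_norm2_def by (rule infsum_cmult_right')
  finally show ?thesis .
qed

lemma psi_norm2_eq:
  assumes q: "0 < q"
  shows "psi_norm2 q n = q powr (n * (n + 1)) * psi_norm2 q 0"
proof (induction n rule: int_induct[where k = 0])
  case (step1 i)
  then have "psi_norm2 q (i + 1) = q powr (2 * (i + 1)) * (q powr (i * (i + 1)) * psi_norm2 q 0)"
    by (simp add: psi_norm2_succ[OF q])
  also have "\<dots> = q powr (real_of_int (2 * (i + 1)) + real_of_int (i * (i + 1))) * psi_norm2 q 0"
    by (simp add: powr_add mult.assoc)
  also have "real_of_int (2 * (i + 1)) + real_of_int (i * (i + 1)) = real_of_int ((i + 1) * (i + 1 + 1))"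
    by (simp add: algebra_simps)
  finally show ?case .
next
  case (step2 i)
  have "psi_norm2 q i = q powr (2 * i) * psi_norm2 q (i - 1)"
    using psi_norm2_succ[OF q, of "i - 1"] by simp
  then have "psi_norm2 q (i - 1) = psi_norm2 q i / q powr (2 * i)"
    using q by (simp add: field_simps)
  also have "\<dots> = q powr (real_of_int (i * (i + 1)) - real_of_int (2 * i)) * psi_norm2 q 0"
    using step2 q by (simp add: powr_diff)
  also have "real_of_int (i * (i + 1)) - real_of_int (2 * i) = real_of_int ((i - 1) * (i - 1 + 1))"
    by (simp add: algebra_simps)
  finally show ?case .
qed (use q in simp)

lemma psi_norm2_pos:
  assumes q: "0 < q" "q < 1"
  shows "0 < psi_norm2 q n"
proof -
  have "(\<Sum>F\<in>{{}}. if charge F = 0 then weight q F ^ 2 else 0) \<le> psi_norm2 q 0"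
    unfolding psi_norm2_def
    by (rule finite_sum_le_infsum[OF summable_on_weight_square_restrict[OF q]])
      (auto simp: configs_def)
  then have "1 \<le> psi_norm2 q 0"
    by (simp add: charge_def weight_def)
  then show ?thesis
    using psi_norm2_eq[OF q(1), of n] q by simp
qed

lemma psi_norm2_split:
  fixes q :: real
  assumes q: "0 < q" "q < 1"
  shows "psi_norm2 q n = psi_norm2_avoiding q x n + (q ^ nat \<bar>x\<bar>)\<^sup>2 * psi_norm2_avoiding q x (n - site_sign x)"
proof -
  let ?avoid = "\<lambda>F. if charge F = n \<and> x \<notin> F then weight q F ^ 2 else 0"
  let ?hit = "\<lambda>F. if charge F = n \<and> x \<in> F then weight q F ^ 2 else 0"
  have "psi_norm2 q n = (\<Sum>\<^sub>\<infinity>F\<in>configs. ?avoid F + ?hit F)"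
    unfolding psi_norm2_def by (rule infsum_cong) auto
  also have "\<dots> = psi_norm2_avoiding q x n + (\<Sum>\<^sub>\<infinity>F\<in>configs. ?hit F)"
    unfolding psi_norm2_avoiding_def
    by (intro infsum_add summable_on_weight_square_restrict q)
  also have "(\<Sum>\<^sub>\<infinity>F\<in>configs. ?hit F) = (\<Sum>\<^sub>\<infinity>H\<in>configs. ?hit (flip x H))"
    by (rule infsum_reindex_bij_betw[OF bij_betw_flip, symmetric])
  also have "\<dots> = (\<Sum>\<^sub>\<infinity>H\<in>configs. (q ^ nat \<bar>x\<bar>)\<^sup>2 *
                    (if charge H = n - site_sign x \<and> x \<notin> H then weight q H ^ 2 else 0))"
    by (rule infsum_cong)
      (auto simp: configs_def flip_def charge_insert weight_insert power_mult_distrib)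
  also have "\<dots> = (q ^ nat \<bar>x\<bar>)\<^sup>2 * psi_norm2_avoiding q x (n - site_sign x)"
    unfolding psi_norm2_avoiding_def by (rule infsum_cmult_right')
  finally show ?thesis .
qed

lemma psi_norm2_avoiding_bounds:
  fixes q :: real
  assumes q: "0 < q" "q < 1"
  shows "0 \<le> psi_norm2_avoiding q x n" "psi_norm2_avoiding q x n \<le> psi_norm2 q n"
proof -
  show "0 \<le> psi_norm2_avoiding q x n"
    unfolding psi_norm2_avoiding_def by (rule infsum_nonneg) simp
  show "psi_norm2_avoiding q x n \<le> psi_norm2 q n"
    unfolding psi_norm2_avoiding_def psi_norm2_def
    by (rule infsum_mono[OF summable_on_weight_square_restrict[OF q] summable_on_weight_square_restrict[OF q]]) simp
qed

lemma psi_norm2_avoiding_sums: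
  fixes q :: real and x :: int
  assumes q: "0 < q" "q < 1"
  shows "(\<lambda>j. (- (q ^ nat \<bar>x\<bar>)\<^sup>2) ^ j * (q ^ (j * (j + 1)) * psi_norm2 q 0)) sums
           psi_norm2_avoiding q x (if x \<ge> 1 then -1 else 0)"
proof -
  \<comment> \<open>The charges along which psi_norm2_split is unrolled; they move away from the
    sectors 0 and -1, so the norms decay like q^(j(j+1)).\<close>
  define m where "m j = (if x \<ge> 1 then - 1 - int j else int j)" for j
  have m_Suc: "m (Suc j) = m j - site_sign x" for j
    by (simp add: m_def site_sign_def)
  have norm2_m: "psi_norm2 q (m j) = q ^ (j * (j + 1)) * psi_norm2 q 0" for j
  proof -
    have "m j * (m j + 1) = int (j * (j + 1))"
      by (cases "x \<ge> 1") (simp_all add: m_def algebra_simps)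
    then have "psi_norm2 q (m j) = q powr real (j * (j + 1)) * psi_norm2 q 0"
      using psi_norm2_eq[OF q(1), of "m j"] by simp
    then show ?thesis
      by (simp only: powr_realpow[OF q(1)])
  qed
  have "(\<lambda>j. q ^ (j * (j + 1)) * psi_norm2 q 0) \<longlonglongrightarrow> 0"
  proof (rule Lim_null_comparison)
    have "q ^ (j * (j + 1)) \<le> q ^ j" for j
      using q by (intro power_decreasing) auto
    then show "\<forall>\<^sub>F j in sequentially. norm (q ^ (j * (j + 1)) * psi_norm2 q 0) \<le> q ^ j * psi_norm2 q 0"
      using psi_norm2_pos[OF q, of 0] q by (intro always_eventually allI) (auto simp: abs_mult intro!: mult_right_mono)
    show "(\<lambda>j. q ^ j * psi_norm2 q 0) \<longlonglongrightarrow> 0"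
      by (rule tendsto_mult_left_zero[OF LIMSEQ_power_zero]) (use q in simp)
  qed
  then have norm2_tendsto: "(\<lambda>j. psi_norm2 q (m j)) \<longlonglongrightarrow> 0"
    by (simp only: norm2_m)
  have avoiding_tendsto: "(\<lambda>j. psi_norm2_avoiding q x (m j)) \<longlonglongrightarrow> 0"
    by (rule tendsto_sandwich[OF _ _ tendsto_const norm2_tendsto])
      (simp_all add: psi_norm2_avoiding_bounds[OF q])
  have split: "psi_norm2 q (m k) =
      psi_norm2_avoiding q x (m k) + (q ^ nat \<bar>x\<bar>)\<^sup>2 * psi_norm2_avoiding q x (m (Suc k))" for k
    unfolding m_Suc by (rule psi_norm2_split[OF q])
  have "\<bar>(q ^ nat \<bar>x\<bar>)\<^sup>2\<bar> \<le> 1"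
    using q by (simp add: power_le_one)
  from alternating_telescoping_sums[OF split this avoiding_tendsto]
  have "(\<lambda>j. (- (q ^ nat \<bar>x\<bar>)\<^sup>2) ^ j * psi_norm2 q (m j)) sums psi_norm2_avoiding q x (m 0)" .
  moreover have "m 0 = (if x \<ge> 1 then -1 else 0)"
    by (simp add: m_def)
  ultimately show ?thesis
    unfolding norm2_m by simp
qed

definition S1_element :: "real \<Rightarrow> int \<Rightarrow> int \<Rightarrow> real" where
  "S1_element q x n = ip (ket q n) (S1 x (ket q (n - 1)))"

lemma ket_eq: "ket q n F = psi q n F / sqrt (psi_norm2 q n)"
  by (simp add: ket_def hnorm_psi)

lemma S1_element_eq_infsum:
  "S1_element q x n = (\<Sum>\<^sub>\<infinity>G\<in>configs. ket q n G * ket q (n - 1) (flip x G) / 2)"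
  by (simp add: S1_element_def ip_def S1_apply)

lemma psi_translate:
  assumes "0 < q" "finite F"
  shows "psi q (n + 1) (translate F) = q powr (n + 1) * psi q n F"
  using assms by (auto simp: psi_def charge_translate weight_translate)

lemma ket_translate:
  assumes q: "0 < q" "q < 1" and F: "finite F"
  shows "ket q (n + 1) (translate F) = ket q n F"
proof -
  have "sqrt (psi_norm2 q (n + 1)) = sqrt ((q powr (n + 1))\<^sup>2 * psi_norm2 q n)"
    by (simp add: psi_norm2_succ[OF q(1)] power2_eq_square flip: powr_add)
  also have "\<dots> = q powr (n + 1) * sqrt (psi_norm2 q n)"
    by (simp add: real_sqrt_mult)
  finally show ?thesis
    using q by (simp add: ket_eq psi_translate[OF q(1) F])
qed

lemma S1_element_translate:
  assumes q: "0 < q" "q < 1"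
  shows "S1_element q (x + 1) (n + 1) = S1_element q x n"
proof -
  have "S1_element q (x + 1) (n + 1) =
        (\<Sum>\<^sub>\<infinity>G\<in>configs. ket q (n + 1) (translate G) * ket q n (flip (x + 1) (translate G)) / 2)"
    unfolding S1_element_eq_infsum
    using infsum_reindex_bij_betw[OF bij_betw_translate,
        of "\<lambda>G. ket q (n + 1) G * ket q n (flip (x + 1) G) / 2"]
    by simp
  also have "\<dots> = S1_element q x n"
    unfolding S1_element_eq_infsum
  proof (rule infsum_cong)
    fix G assume "G \<in> configs"
    then have "finite G"
      by (simp add: configs_def)
    then show "ket q (n + 1) (translate G) * ket q n (flip (x + 1) (translate G)) / 2 =
               ket q n G * ket q (n - 1) (flip x G) / 2"
      using ket_translate[OF q, of "flip x G" "n - 1"]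
      by (simp add: ket_translate[OF q] flip: translate_flip)
  qed
  finally show ?thesis .
qed

lemma S1_element_shift_to_zero:
  assumes q: "0 < q" "q < 1"
  shows "S1_element q x n = S1_element q (x - n) 0"
proof (induction n arbitrary: x rule: int_induct[where k = 0])
  case (step1 i)
  then show ?case
    using S1_element_translate[OF q, of "x - 1" i] by (simp add: algebra_simps)
next
  case (step2 i)
  then show ?case
    using S1_element_translate[OF q, of x "i - 1"] step2.IH[of "x + 1"] by (simp add: algebra_simps)
qed simp

lemma psi_mul_psi_flip:
  assumes "finite H"
  shows "psi q n H * psi q (n + site_sign x) (flip x H) =
         q ^ nat \<bar>x\<bar> * (if charge H = n \<and> x \<notin> H then weight q H ^ 2 else 0)"
proof (cases "x \<in> H")
  case True
  then have "charge (flip x H) \<noteq> charge H + site_sign x"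
    using assms by (simp add: flip_def charge_remove site_sign_def)
  then show ?thesis
    using True by (auto simp: psi_def)
next
  case False
  then show ?thesis
    using assms by (simp add: psi_def flip_def charge_insert weight_insert power2_eq_square)
qed

lemma infsum_psi_mul_psi_flip:
  "(\<Sum>\<^sub>\<infinity>G\<in>configs. psi q n G * psi q (n + site_sign x) (flip x G)) =
   q ^ nat \<bar>x\<bar> * psi_norm2_avoiding q x n"
  unfolding psi_norm2_avoiding_def infsum_cmult_right'[symmetric]
  by (rule infsum_cong) (simp add: psi_mul_psi_flip configs_def)

lemma infsum_psi_mul_psi_flip_commute:
  "(\<Sum>\<^sub>\<infinity>G\<in>configs. psi q n G * psi q m (flip x G)) =
   (\<Sum>\<^sub>\<infinity>G\<in>configs. psi q m G * psi q n (flip x G))"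
  by (subst infsum_reindex_bij_betw[OF bij_betw_flip, of _ x, symmetric]) (simp add: mult.commute)

lemma S1_element_zero_eq:
  assumes q: "0 < q" "q < 1"
  shows "S1_element q x 0 =
         q ^ nat \<bar>x\<bar> * psi_norm2_avoiding q x (if x \<ge> 1 then -1 else 0) * (1 / (2 * psi_norm2 q 0))"
proof -
  have norm2_pos: "0 < psi_norm2 q 0"
    by (rule psi_norm2_pos[OF q])
  have norm2_minus_one: "psi_norm2 q (-1) = psi_norm2 q 0"
    using psi_norm2_eq[OF q(1), of "-1"] q by simp
  have "S1_element q x 0 =
      (\<Sum>\<^sub>\<infinity>G\<in>configs. psi q 0 G * psi q (-1) (flip x G) * (1 / (2 * psi_norm2 q 0)))"
    unfolding S1_element_eq_infsum
    by (rule infsum_cong) (use norm2_pos in \<open>simp add: ket_eq norm2_minus_one mult_ac\<close>)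
  also have "\<dots> = (\<Sum>\<^sub>\<infinity>G\<in>configs. psi q 0 G * psi q (-1) (flip x G)) * (1 / (2 * psi_norm2 q 0))"
    by (rule infsum_cmult_left')
  also have "(\<Sum>\<^sub>\<infinity>G\<in>configs. psi q 0 G * psi q (-1) (flip x G)) =
             q ^ nat \<bar>x\<bar> * psi_norm2_avoiding q x (if x \<ge> 1 then -1 else 0)"
  \<comment> \<open>Flipping x lowers the charge by removing x if x \<ge> 1 and by adding it if x \<le> 0;
    in the first case the roles of psi_0 and psi_(-1) are exchanged by the symmetry of S1_x.\<close>
  proof (cases "x \<ge> 1")
    case True
    have "(\<Sum>\<^sub>\<infinity>G\<in>configs. psi q 0 G * psi q (-1) (flip x G)) =
          (\<Sum>\<^sub>\<infinity>G\<in>configs. psi q (-1) G * psi q (-1 + site_sign x) (flip x G))"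
      using True by (simp add: site_sign_def infsum_psi_mul_psi_flip_commute[of q 0])
    then show ?thesis
      using True infsum_psi_mul_psi_flip[of q "-1" x] by simp
  next
    case False
    then show ?thesis
      using infsum_psi_mul_psi_flip[of q 0 x] by (simp add: site_sign_def)
  qed
  finally show ?thesis .
qed

definition S1_term :: "real \<Rightarrow> int \<Rightarrow> nat \<Rightarrow> real" where
  "S1_term q x j = (-1) ^ j * q ^ (j * (j + 1)) * (q ^ (1 + 2 * j)) ^ nat \<bar>x\<bar> / 2"

lemma abs_S1_term_le:
  assumes q: "0 < q" "q < 1"
  shows "\<bar>S1_term q x j\<bar> \<le> q ^ j * q ^ nat \<bar>x\<bar>"
proof -
  have "q ^ (j * (j + 1)) \<le> q ^ j"
    using q by (intro power_decreasing) auto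
  moreover have "(q ^ (1 + 2 * j)) ^ nat \<bar>x\<bar> \<le> q ^ nat \<bar>x\<bar>"
    using q power_decreasing[of 1 "1 + 2 * j" q] by (intro power_mono) auto
  ultimately have "q ^ (j * (j + 1)) * (q ^ (1 + 2 * j)) ^ nat \<bar>x\<bar> \<le> q ^ j * q ^ nat \<bar>x\<bar>"
    using q by (intro mult_mono) auto
  moreover have "\<bar>S1_term q x j\<bar> = q ^ (j * (j + 1)) * (q ^ (1 + 2 * j)) ^ nat \<bar>x\<bar> / 2"
    using q by (simp add: S1_term_def abs_mult power_abs)
  moreover have "0 \<le> q ^ j * q ^ nat \<bar>x\<bar>"
    using q by simp
  ultimately show ?thesis
    by linarith
qed

lemma S1_term_sums:
  assumes q: "0 < q" "q < 1"
  shows "S1_term q x sums S1_element q x 0"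
proof -
  define c where "c = q ^ nat \<bar>x\<bar> * (1 / (2 * psi_norm2 q 0))"
  have "(\<lambda>j. c * ((- (q ^ nat \<bar>x\<bar>)\<^sup>2) ^ j * (q ^ (j * (j + 1)) * psi_norm2 q 0))) sums
        (c * psi_norm2_avoiding q x (if x \<ge> 1 then -1 else 0))"
    by (rule sums_mult[OF psi_norm2_avoiding_sums[OF q]])
  moreover have "c * ((- (q ^ nat \<bar>x\<bar>)\<^sup>2) ^ j * (q ^ (j * (j + 1)) * psi_norm2 q 0)) = S1_term q x j" for j
  proof -
    have "(- (q ^ nat \<bar>x\<bar>)\<^sup>2) ^ j = (-1) ^ j * (q ^ (2 * j)) ^ nat \<bar>x\<bar>"
      by (subst power_minus) (simp add: mult_ac flip: power_mult)
    moreover have "(q ^ (1 + 2 * j)) ^ nat \<bar>x\<bar> = q ^ nat \<bar>x\<bar> * (q ^ (2 * j)) ^ nat \<bar>x\<bar>"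
      by (simp add: power_add power_mult_distrib)
    ultimately show ?thesis
      using psi_norm2_pos[OF q, of 0] by (simp add: c_def S1_term_def)
  qed
  ultimately show ?thesis
    by (simp add: S1_element_zero_eq[OF q] c_def mult_ac)
qed

lemma summable_on_S1_term:
  assumes q: "0 < q" "q < 1"
  shows "(\<lambda>(x, j). S1_term q x j) summable_on UNIV \<times> UNIV"
proof -
  have geometric: "((\<lambda>j. q ^ j) has_sum 1 / (1 - q)) UNIV"
    using q by (intro has_sum_geometric) auto
  have "(\<lambda>(x, j). q ^ j * q ^ nat \<bar>x\<bar>) summable_on UNIV \<times> UNIV"
  proof (rule summable_on_SigmaI)
    show "((\<lambda>j. case (x, j) of (x, j) \<Rightarrow> q ^ j * q ^ nat \<bar>x\<bar>) has_sum 1 / (1 - q) * q ^ nat \<bar>x\<bar>) UNIV"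
      for x :: int
      using has_sum_cmult_left[OF geometric] by simp
    show "(\<lambda>x::int. 1 / (1 - q) * q ^ nat \<bar>x\<bar>) summable_on UNIV"
      using q by (intro summable_on_cmult_right has_sum_imp_summable[OF has_sum_power_abs_int]) auto
  qed (use q in auto)
  then have "(\<lambda>p. norm (case p of (x, j) \<Rightarrow> S1_term q x j)) summable_on UNIV \<times> UNIV"
    by (rule summable_on_comparison_test) (auto simp: abs_S1_term_le[OF q])
  then show ?thesis
    by (rule iffD2[OF summable_on_iff_abs_summable_on_real])
qed

lemma has_sum_S1_term_row:
  assumes q: "0 < q" "q < 1"
  shows "(S1_term q x has_sum S1_element q x 0) UNIV"
proof (rule norm_summable_imp_has_sum[OF _ S1_term_sums[OF q]])
  have "summable (\<lambda>j. q ^ j * q ^ nat \<bar>x\<bar>)"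
    using q by (intro summable_mult2 summable_geometric) simp
  then show "summable (\<lambda>j. norm (S1_term q x j))"
    by (rule summable_comparison_test'[where N = 0]) (simp add: abs_S1_term_le[OF q])
qed

lemma has_sum_S1_term_column:
  assumes q: "0 < q" "q < 1"
  shows "((\<lambda>x. S1_term q x j) has_sum
           1 / 2 * ((-1) ^ j * q ^ (j * (j + 1)) * ((1 + q ^ (1 + 2 * j)) / (1 - q ^ (1 + 2 * j))))) UNIV"
proof -
  have "q ^ (1 + 2 * j) < 1"
    by (rule le_less_trans[OF power_decreasing[of 1 "1 + 2 * j" q]]) (use q in auto)
  then have "((\<lambda>x::int. (q ^ (1 + 2 * j)) ^ nat \<bar>x\<bar>) has_sum (1 + q ^ (1 + 2 * j)) / (1 - q ^ (1 + 2 * j))) UNIV"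
    using q by (intro has_sum_power_abs_int) auto
  from has_sum_cmult_right[OF this, of "(-1) ^ j * q ^ (j * (j + 1)) / 2"]
  show ?thesis
    by (simp add: S1_term_def mult_ac)
qed

lemma has_sum_S1_element_zero:
  assumes q: "0 < q" "q < 1"
  shows "((\<lambda>x. S1_element q x 0) has_sum
           1 / 2 * (\<Sum>k. (-1) ^ k * q ^ (k * (k + 1)) * ((1 + q ^ (1 + 2 * k)) / (1 - q ^ (1 + 2 * k))))) UNIV"
proof -
  define t where "t = (\<lambda>k. (-1) ^ k * q ^ (k * (k + 1)) * ((1 + q ^ (1 + 2 * k)) / (1 - q ^ (1 + 2 * k))))"
  obtain s where s: "((\<lambda>x. S1_element q x 0) has_sum s) UNIV" "((\<lambda>k. 1 / 2 * t k) has_sum s) UNIV"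
    unfolding t_def
    by (rule has_sum_iterated_eq[OF summable_on_S1_term[OF q] has_sum_S1_term_row[OF q]
          has_sum_S1_term_column[OF q]])
  from has_sum_imp_sums[OF s(2)] have "(\<lambda>k. 1 / 2 * t k) sums s" .
  then have "summable t" and "s = 1 / 2 * suminf t"
    by (auto simp: sums_iff suminf_divide)
  with s(1) show ?thesis
    unfolding t_def by simp
qed

lemma has_sum_S1_element:
  assumes q: "0 < q" "q < 1"
  shows "((\<lambda>x. S1_element q x n) has_sum
           1 / 2 * (\<Sum>k. (-1) ^ k * q ^ (k * (k + 1)) * ((1 + q ^ (1 + 2 * k)) / (1 - q ^ (1 + 2 * k))))) UNIV"
proof -
  have shift: "bij_betw (\<lambda>x. x - n) UNIV UNIV"
    by (rule bij_betwI[where g = "\<lambda>x. x + n"]) auto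
  have "(\<lambda>x. S1_element q x n) = (\<lambda>x. S1_element q (x - n) 0)"
    by (simp only: S1_element_shift_to_zero[OF q, of _ n])
  then show ?thesis
    using has_sum_reindex_bij_betw[OF shift, where f = "\<lambda>y. S1_element q y 0"] has_sum_S1_element_zero[OF q]
    by simp
qed

theorem lemmaA:
  fixes q :: real
  assumes "0 < q" and "q < 1"
  shows "\<forall>n::int.
           (\<lambda>x. ip (ket q n) (S1 x (ket q (n - 1)))) summable_on (UNIV :: int set) \<and>
           (\<Sum>\<^sub>\<infinity>x\<in>(UNIV :: int set). ip (ket q n) (S1 x (ket q (n - 1))))
             = (1/2) * (\<Sum>k. (-1) ^ k * q ^ (k * (k + 1)) *
                   ((1 + q ^ (1 + 2 * k)) / (1 - q ^ (1 + 2 * k))))"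
  using has_sum_S1_element[OF assms] by (simp add: has_sum_iff S1_element_def)

end
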